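(* Let $\mathcal{G}=\langle G_1,\dots,G_L\rangle$ be a non-strict temporal graph with vertex set $V$ in which every layer consists of exactly two components and no two consecutive layers have the same partition. If for some $i$ with $2\le i\le L-1$ the transition from step $i-1$ to step $i$ is free and the transition from step $i$ to step $i+1$ is restricted, then for every $s\in V$ there is a non-strict exploration schedule starting at $s$.
   Context: A non-strict temporal graph $\mathcal{G}=\langle G_1,\dots,G_L\rangle$ with vertex set $V$ is a sequence of partitions $G_t$ of $V$ into components. A non-strict temporal walk starting at $v$ at time $t_1$ is a sequence of components $C_{t_1},\dots,C_{t_l}$ with $t_{j+1}=t_j+1$, $C_{t_j}\in G_{t_j}$, $C_{t_j}\cap C_{t_{j+1}}\neq\emptyset$, $v\in C_{t_1}$, $t_l\le L$; it visits $\bigcup_j C_{t_j}$. A non-strict exploration schedule starting at $s$ is such a walk starting at $s$ at time $1$ that visits all of $V$. For $G_i=\{A_i,B_i\}$, $G_{i+1}=\{A_{i+1},B_{i+1}\}$, the transition from step $i$ to $i+1$ is free if $A_i\cap A_{i+1}$, $A_i\cap B_{i+1}$, $B_i\cap A_{i+1}$, $B_i\cap B_{i+1}$ are all non-empty, and restricted if exactly one of them is empty. *)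

theory Defs
  imports Main "HOL-Library.Disjoint_Sets"
begin

definition temporal_graph :: "'a set \<Rightarrow> nat \<Rightarrow> (nat \<Rightarrow> 'a set set) \<Rightarrow> bool" where
  "temporal_graph V L G \<longleftrightarrow> (\<forall>t\<in>{1..L}. partition_on V (G t))"

definition temporal_walk :: "nat \<Rightarrow> (nat \<Rightarrow> 'a set set) \<Rightarrow> 'a \<Rightarrow> nat \<Rightarrow> 'a set list \<Rightarrow> bool" where
  "temporal_walk L G v t1 Cs \<longleftrightarrow>
     Cs \<noteq> [] \<and> 1 \<le> t1 \<and> t1 + length Cs - 1 \<le> L \<and>
     (\<forall>j<length Cs. Cs ! j \<in> G (t1 + j)) \<and>
     (\<forall>j. Suc j < length Cs \<longrightarrow> Cs ! j \<inter> Cs ! Suc j \<noteq> {}) \<and>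
     v \<in> hd Cs"

definition visits :: "'a set list \<Rightarrow> 'a set" where
  "visits Cs = \<Union> (set Cs)"

definition exploration_schedule :: "'a set \<Rightarrow> nat \<Rightarrow> (nat \<Rightarrow> 'a set set) \<Rightarrow> 'a \<Rightarrow> 'a set list \<Rightarrow> bool" where
  "exploration_schedule V L G s Cs \<longleftrightarrow> temporal_walk L G s 1 Cs \<and> V \<subseteq> visits Cs"

definition free_transition :: "(nat \<Rightarrow> 'a set set) \<Rightarrow> nat \<Rightarrow> bool" where
  "free_transition G i \<longleftrightarrow> (\<forall>X\<in>G i. \<forall>Y\<in>G (Suc i). X \<inter> Y \<noteq> {})"

definition restricted_transition :: "(nat \<Rightarrow> 'a set set) \<Rightarrow> nat \<Rightarrow> bool" where
  "restricted_transition G i \<longleftrightarrow>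
     card {(X, Y). X \<in> G i \<and> Y \<in> G (Suc i) \<and> X \<inter> Y = {}} = 1"

end

theory Submission
  imports Defs
begin

text \<open>Let \<open>X \<in> G i\<close>, \<open>Y \<in> G (i + 1)\<close> be the unique disjoint pair of components and let
  \<open>B\<close>, \<open>A\<close> be the other components. Then \<open>X \<subseteq> A\<close>, so \<open>B \<union> A = V\<close>, and \<open>B \<inter> A \<noteq> {}\<close>
  because \<open>(B, A)\<close> is not the disjoint pair. An exploration schedule waits in the component
  of \<open>s\<close> up to step \<open>i - 1\<close>, moves into \<open>B\<close> (possible since the transition into step \<open>i\<close> is
  free) and then into \<open>A\<close>.\<close>

lemma partition_on_card_2_other:
  assumes "partition_on V P" "card P = 2" "X \<in> P"
  shows "\<exists>B\<in>P. B \<noteq> X \<and> V = X \<union> B"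
proof -
  obtain a b where "P = {a, b}" "a \<noteq> b"
    using \<open>card P = 2\<close> by (meson card_2_iff)
  then obtain B where "B \<noteq> X" "P = {X, B}"
    using \<open>X \<in> P\<close> by auto
  moreover have "V = \<Union>P"
    using \<open>partition_on V P\<close> by (rule partition_onD1)
  ultimately show ?thesis
    by auto
qed

lemma restricted_transition_covering_pair:
  assumes "partition_on V (G i)" "partition_on V (G (Suc i))"
    and "card (G i) = 2" "card (G (Suc i)) = 2"
    and "restricted_transition G i"
  obtains B A where "B \<in> G i" "A \<in> G (Suc i)" "B \<inter> A \<noteq> {}" "V \<subseteq> B \<union> A"
proof -
  let ?D = "{(X, Y). X \<in> G i \<and> Y \<in> G (Suc i) \<and> X \<inter> Y = {}}"
  have "card ?D = 1"
    using \<open>restricted_transition G i\<close> unfolding restricted_transition_def .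
  then obtain p where "?D = {p}"
    by (rule card_1_singletonE)
  then obtain X Y where D: "?D = {(X, Y)}"
    by (cases p) simp
  then have "(X, Y) \<in> ?D"
    by simp
  then have XY: "X \<in> G i" "Y \<in> G (Suc i)" "X \<inter> Y = {}"
    by simp_all
  obtain B where B: "B \<in> G i" "B \<noteq> X" "V = X \<union> B"
    using partition_on_card_2_other[OF assms(1,3) XY(1)] by blast
  obtain A where A: "A \<in> G (Suc i)" "A \<noteq> Y" "V = Y \<union> A"
    using partition_on_card_2_other[OF assms(2,4) XY(2)] by blast
  have "B \<inter> A \<noteq> {}"
  proof
    assume "B \<inter> A = {}"
    then have "(B, A) \<in> ?D"
      using A(1) B(1) by simp
    then show False
      using D \<open>B \<noteq> X\<close> by simp
  qed
  moreover have "V \<subseteq> B \<union> A"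
    using XY(3) A(3) B(3) by blast
  ultimately show thesis
    using that A(1) B(1) by blast
qed

lemma temporal_walk_last:
  assumes "temporal_walk L G v t1 Cs"
  shows "last Cs \<in> G (t1 + length Cs - 1)"
proof -
  have "Cs \<noteq> []" "\<forall>j<length Cs. Cs ! j \<in> G (t1 + j)"
    using assms unfolding temporal_walk_def by auto
  then have "Cs ! (length Cs - 1) \<in> G (t1 + (length Cs - 1))"
    by simp
  moreover have "t1 + (length Cs - 1) = t1 + length Cs - 1"
    using \<open>Cs \<noteq> []\<close> by (cases Cs) simp_all
  ultimately show ?thesis
    using \<open>Cs \<noteq> []\<close> by (simp add: last_conv_nth)
qed

lemma temporal_walk_snoc:
  assumes walk: "temporal_walk L G v t1 Cs"
    and "C \<in> G (t1 + length Cs)" "last Cs \<inter> C \<noteq> {}" "t1 + length Cs \<le> L"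
  shows "temporal_walk L G v t1 (Cs @ [C])"
proof -
  have "Cs \<noteq> []"
    using walk unfolding temporal_walk_def by blast
  have "(Cs @ [C]) ! j \<in> G (t1 + j)" if "j < length (Cs @ [C])" for j
    using that walk assms(2) unfolding temporal_walk_def
    by (auto simp: nth_append less_Suc_eq)
  moreover have "(Cs @ [C]) ! j \<inter> (Cs @ [C]) ! Suc j \<noteq> {}"
    if "Suc j < length (Cs @ [C])" for j
  proof (cases "Suc j < length Cs")
    case True
    then show ?thesis
      using walk unfolding temporal_walk_def by (simp add: nth_append)
  next
    case False
    with that have "j = length Cs - 1"
      by simp
    then show ?thesis
      using \<open>Cs \<noteq> []\<close> assms(3) by (simp add: nth_append last_conv_nth)
  qed
  ultimately show ?thesis
    using walk \<open>Cs \<noteq> []\<close> assms(4) unfolding temporal_walk_def by auto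
qed

lemma temporal_walk_wait:
  assumes "temporal_graph V L G" "v \<in> V"
    and "1 \<le> t1" "0 < n" "t1 + n - 1 \<le> L"
  shows "\<exists>Cs. temporal_walk L G v t1 Cs \<and> length Cs = n \<and> v \<in> last Cs"
  using assms(4,5)
proof (induction n)
  case 0
  then show ?case
    by simp
next
  case (Suc n)
  have "\<exists>C\<in>G (t1 + n). v \<in> C"
    using assms(1,2,3) Suc.prems(2) unfolding temporal_graph_def partition_on_def by auto
  then obtain C where C: "C \<in> G (t1 + n)" "v \<in> C"
    by blast
  show ?case
  proof (cases "n = 0")
    case True
    then have "temporal_walk L G v t1 [C]"
      using C assms(3) Suc.prems(2) unfolding temporal_walk_def by auto
    then show ?thesis
      using C True by auto
  next
    case False
    then have "\<exists>Cs. temporal_walk L G v t1 Cs \<and> length Cs = n \<and> v \<in> last Cs"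
      using Suc.IH Suc.prems(2) by simp
    then obtain Cs where Cs: "temporal_walk L G v t1 Cs" "length Cs = n" "v \<in> last Cs"
      by blast
    then have "temporal_walk L G v t1 (Cs @ [C])"
      using C Suc.prems(2) by (intro temporal_walk_snoc) auto
    then show ?thesis
      using Cs C by auto
  qed
qed

theorem lemma4:
  fixes V :: "'a set" and L :: nat and G :: "nat \<Rightarrow> 'a set set" and i :: nat and s :: 'a
  assumes "temporal_graph V L G"
    and "\<forall>t\<in>{1..L}. card (G t) = 2"
    and "\<forall>t. 1 \<le> t \<and> t < L \<longrightarrow> G t \<noteq> G (Suc t)"
    and "2 \<le> i" and "i \<le> L - 1"
    and "free_transition G (i - 1)"
    and "restricted_transition G i"
    and "s \<in> V"
  shows "\<exists>Cs. exploration_schedule V L G s Cs"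
proof -
  have steps: "i \<in> {1..L}" "Suc i \<in> {1..L}"
    using assms(4,5) by auto
  have layers: "partition_on V (G i)" "partition_on V (G (Suc i))"
    using assms(1) steps unfolding temporal_graph_def by blast+
  have cards: "card (G i) = 2" "card (G (Suc i)) = 2"
    using assms(2) steps by blast+
  obtain B A where BA: "B \<in> G i" "A \<in> G (Suc i)" "B \<inter> A \<noteq> {}" "V \<subseteq> B \<union> A"
    using restricted_transition_covering_pair[OF layers cards assms(7)] .
  have "\<exists>Cs. temporal_walk L G s 1 Cs \<and> length Cs = i - 1 \<and> s \<in> last Cs"
    using assms(4,5) by (intro temporal_walk_wait[OF assms(1,8)]) auto
  then obtain Cs where Cs: "temporal_walk L G s 1 Cs" "length Cs = i - 1"
    by blast
  have len: "1 + length Cs = i"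
    using Cs(2) assms(4) by simp
  have "last Cs \<in> G (i - 1)" "B \<in> G (Suc (i - 1))"
    using temporal_walk_last[OF Cs(1)] Cs(2) BA(1) assms(4) by simp_all
  then have "last Cs \<inter> B \<noteq> {}"
    using assms(6) unfolding free_transition_def by blast
  then have "temporal_walk L G s 1 (Cs @ [B])"
    using temporal_walk_snoc[OF Cs(1), of B] BA(1) len steps by simp
  then have "temporal_walk L G s 1 ((Cs @ [B]) @ [A])"
    using temporal_walk_snoc[of L G s 1 "Cs @ [B]" A] BA(2,3) len steps by simp
  moreover have "V \<subseteq> visits ((Cs @ [B]) @ [A])"
    using BA(4) unfolding visits_def by auto
  ultimately show ?thesis
    unfolding exploration_schedule_def by blast
qed

end
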